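(* Let $\mathbf{M}=(m_{i,j})$ be a $k\times n$ binary matrix with $k \le n$. For $i\in[k]$ let $R_i=\{j\in[n]: m_{i,j}\neq 0\}$ be the support of row $i$, and for $j\in[n]$ let $C_j=\{i\in[k]: m_{i,j}\neq 0\}$ be the support of column $j$. Then the condition $$\Big|\bigcup_{j\in J} C_j\Big| \ge |J| \quad\text{for every } J\subseteq[n] \text{ with } |J|\le k$$ is equivalent to the condition $$\Big|\bigcup_{i\in I} R_i\Big| \ge n-k+|I| \quad\text{for every nonempty } I\subseteq[k].$$
   Context: $[n]=\{1,\dots,n\}$. *)

theory Defs
  imports Main
begin

text \<open>A k x n matrix is a function m with m i j the (i,j) entry, i in {1..k}, j in {1..n}.\<close>

definition row_support :: "(nat \<Rightarrow> nat \<Rightarrow> nat) \<Rightarrow> nat \<Rightarrow> nat \<Rightarrow> nat set" where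
  "row_support m n i = {j \<in> {1..n}. m i j \<noteq> 0}"

definition col_support :: "(nat \<Rightarrow> nat \<Rightarrow> nat) \<Rightarrow> nat \<Rightarrow> nat \<Rightarrow> nat set" where
  "col_support m k j = {i \<in> {1..k}. m i j \<noteq> 0}"

end

theory Submission
  imports Defs
begin

text \<open>Both conditions are Hall-type conditions for the same bipartite graph, and they are
  exchanged by complementation: if the rows in \<open>I\<close> avoid a set \<open>J\<close> of columns, then the
  columns in \<open>J\<close> only meet rows outside \<open>I\<close>, and vice versa. A violating \<open>I\<close> therefore
  yields a violating \<open>J\<close> inside the complement of the row union of \<open>I\<close>, and a violating \<open>J\<close>
  yields the violating \<open>I\<close> complementary to its column union. Binarity of the entries
  plays no role; only their being zero or not matters.\<close>

lemma row_support_subset: "row_support m n i \<subseteq> {1..n}"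
  unfolding row_support_def by auto

lemma col_support_subset: "col_support m k j \<subseteq> {1..k}"
  unfolding col_support_def by auto

lemma col_supports_subset_if_disjoint_row_supports:
  assumes "J \<subseteq> {1..n}" and "J \<inter> (\<Union>i\<in>I. row_support m n i) = {}"
  shows "(\<Union>j\<in>J. col_support m k j) \<subseteq> {1..k} - I"
  using assms unfolding row_support_def col_support_def by blast

lemma row_supports_subset_if_disjoint_col_supports:
  assumes "I \<subseteq> {1..k}" and "I \<inter> (\<Union>j\<in>J. col_support m k j) = {}"
  shows "(\<Union>i\<in>I. row_support m n i) \<subseteq> {1..n} - J"
  using assms unfolding row_support_def col_support_def by blast

lemma row_condition_if_col_condition:
  assumes cols: "\<And>J. J \<subseteq> {1..n} \<Longrightarrow> card J \<le> k \<Longrightarrow>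
                    card (\<Union>j\<in>J. col_support m k j) \<ge> card J"
    and "k \<le> n" and I: "I \<subseteq> {1..k}" "I \<noteq> {}"
  shows "card (\<Union>i\<in>I. row_support m n i) \<ge> n - k + card I"
proof (rule ccontr)
  define R where "R = (\<Union>i\<in>I. row_support m n i)"
  assume "\<not> card (\<Union>i\<in>I. row_support m n i) \<ge> n - k + card I"
  then have R_small: "card R < n - k + card I" unfolding R_def by simp
  have "R \<subseteq> {1..n}" unfolding R_def using row_support_subset by blast
  then have card_compl: "card ({1..n} - R) = n - card R"
    by (simp add: card_Diff_subset finite_subset)
  have I_card: "1 \<le> card I" "card I \<le> k"
    using I card_mono[of "{1..k}" I] by (auto simp: Suc_leI card_gt_0_iff finite_subset)
  then have "k - card I + 1 \<le> card ({1..n} - R)"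
    using card_compl R_small \<open>k \<le> n\<close> by linarith
  then obtain J where J: "J \<subseteq> {1..n} - R" "card J = k - card I + 1"
    by (rule obtain_subset_with_card_n)
  have "card J \<le> k" "J \<subseteq> {1..n}"
    using J I_card by auto
  then have "card J \<le> card (\<Union>j\<in>J. col_support m k j)"
    by (rule cols[rotated])
  also have "\<dots> \<le> card ({1..k} - I)"
    using J by (intro card_mono col_supports_subset_if_disjoint_row_supports) (auto simp: R_def)
  also have "\<dots> = k - card I"
    using I by (simp add: card_Diff_subset finite_subset)
  finally show False using J by linarith
qed

lemma col_condition_if_row_condition:
  assumes rows: "\<And>I. I \<subseteq> {1..k} \<Longrightarrow> I \<noteq> {} \<Longrightarrow>
                    card (\<Union>i\<in>I. row_support m n i) \<ge> n - k + card I"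
    and "k \<le> n" and J: "J \<subseteq> {1..n}" "card J \<le> k"
  shows "card (\<Union>j\<in>J. col_support m k j) \<ge> card J"
proof (rule ccontr)
  define C where "C = (\<Union>j\<in>J. col_support m k j)"
  define I where "I = {1..k} - C"
  assume "\<not> card (\<Union>j\<in>J. col_support m k j) \<ge> card J"
  then have C_small: "card C < card J" unfolding C_def by simp
  have "C \<subseteq> {1..k}" unfolding C_def using col_support_subset by blast
  then have card_I: "card I = k - card C"
    unfolding I_def by (simp add: card_Diff_subset finite_subset)
  then have "I \<noteq> {}" using C_small J by (metis card.empty diff_is_0_eq le_trans not_le)
  then have "n - k + card I \<le> card (\<Union>i\<in>I. row_support m n i)"
    by (rule rows[rotated]) (simp add: I_def)
  also have "\<dots> \<le> card ({1..n} - J)"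
    using J by (intro card_mono row_supports_subset_if_disjoint_col_supports)
      (auto simp: I_def C_def)
  also have "\<dots> = n - card J"
    using J by (simp add: card_Diff_subset finite_subset)
  finally show False using card_I C_small J \<open>k \<le> n\<close> by linarith
qed

theorem lemma4:
  fixes m :: "nat \<Rightarrow> nat \<Rightarrow> nat" and k n :: nat
  assumes binary: "\<And>i j. i \<in> {1..k} \<Longrightarrow> j \<in> {1..n} \<Longrightarrow> m i j \<in> {0, 1}"
    and kn: "k \<le> n"
  shows "(\<forall>J. J \<subseteq> {1..n} \<and> card J \<le> k \<longrightarrow>
            card (\<Union>j\<in>J. col_support m k j) \<ge> card J)
     \<longleftrightarrow> (\<forall>I. I \<subseteq> {1..k} \<and> I \<noteq> {} \<longrightarrow>
            card (\<Union>i\<in>I. row_support m n i) \<ge> n - k + card I)"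
proof (intro iffI allI impI)
  fix I assume "\<forall>J. J \<subseteq> {1..n} \<and> card J \<le> k \<longrightarrow>
                   card (\<Union>j\<in>J. col_support m k j) \<ge> card J"
    and "I \<subseteq> {1..k} \<and> I \<noteq> {}"
  then show "card (\<Union>i\<in>I. row_support m n i) \<ge> n - k + card I"
    by (intro row_condition_if_col_condition[OF _ kn]) auto
next
  fix J assume "\<forall>I. I \<subseteq> {1..k} \<and> I \<noteq> {} \<longrightarrow>
                   card (\<Union>i\<in>I. row_support m n i) \<ge> n - k + card I"
    and "J \<subseteq> {1..n} \<and> card J \<le> k"
  then show "card (\<Union>j\<in>J. col_support m k j) \<ge> card J"
    by (intro col_condition_if_row_condition[OF _ kn]) auto
qed

end
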